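(* Let $p \in (0,\frac{1}{2})$ be a constant. No (possibly randomized) sorting algorithm can achieve, on a random instance with $n$ elements, maximum dislocation $o(\log n)$ with high probability (i.e., with probability at least $1 - \frac{1}{n}$).
   Context: Setting: the elements are $S=\{1,\dots,n\}$ with the natural order. A random instance consists of an input permutation of $S$ chosen uniformly at random together with comparison outcomes: for each pair $i<j$ independently, the comparison reports the wrong order with probability exactly $p$ and the correct order otherwise; outcomes are persistent (repeated comparisons of the same pair return the same outcome). The algorithm accesses the elements only via these comparisons and outputs a permutation of $S$. For a sequence and element $x$, the dislocation of $x$ is the absolute difference between its position and its true rank; the maximum dislocation is the maximum over all elements. *)

theory Defs
  imports "HOL-Probability.Probability" "HOL-Combinatorics.Permutations" "HOL-Library.Landau_Symbols"
begin

text \<open>Elements are 0,...,n-1 (a shift of 1,...,n); the true rank of element a is a.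
  Positions are also 0,...,n-1.\<close>

text \<open>Uniformly random input permutation: position i holds element pi i.\<close>
definition input_pmf :: "nat \<Rightarrow> (nat \<Rightarrow> nat) pmf" where
  "input_pmf n = pmf_of_set {\<pi>. \<pi> permutes {..<n}}"

text \<open>Error pattern: for each pair of elements (a,b) with a < b, independently,
  err (a,b) = True (comparison reports the wrong order) with probability p.\<close>
definition error_pmf :: "real \<Rightarrow> nat \<Rightarrow> (nat \<times> nat \<Rightarrow> bool) pmf" where
  "error_pmf p n = Pi_pmf {(a, b). a < b \<and> b < n} False (\<lambda>_. bernoulli_pmf p)"

text \<open>Persistent comparison outcome between elements a and b:
  True means "a is reported smaller than b".\<close>
definition cmp :: "(nat \<times> nat \<Rightarrow> bool) \<Rightarrow> nat \<Rightarrow> nat \<Rightarrow> bool" where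
  "cmp err a b = (if a < b then \<not> err (a, b) else err (b, a))"

text \<open>What a comparison-based algorithm can observe: the outcomes of comparing
  the elements at input positions i and j (persistent, so this table is all it can learn).\<close>
definition observe :: "nat \<Rightarrow> (nat \<Rightarrow> nat) \<Rightarrow> (nat \<times> nat \<Rightarrow> bool) \<Rightarrow> nat \<Rightarrow> nat \<Rightarrow> bool" where
  "observe n \<pi> err i j = (if i < n \<and> j < n \<and> i \<noteq> j then cmp err (\<pi> i) (\<pi> j) else False)"

text \<open>A (possibly randomized) comparison-based sorting algorithm: for each n and each
  table of comparison outcomes between input positions, a distribution over output
  orders sigma, where sigma k is the input position placed at output position k.\<close>
definition valid_algorithm ::
  "(nat \<Rightarrow> (nat \<Rightarrow> nat \<Rightarrow> bool) \<Rightarrow> (nat \<Rightarrow> nat) pmf) \<Rightarrow> bool" where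
  "valid_algorithm A \<longleftrightarrow> (\<forall>n obs. set_pmf (A n obs) \<subseteq> {\<sigma>. \<sigma> permutes {..<n}})"

definition max_dislocation :: "nat \<Rightarrow> (nat \<Rightarrow> nat) \<Rightarrow> nat" where
  "max_dislocation n s = (MAX k \<in> {..<n}. nat \<bar>int k - int (s k)\<bar>)"

definition outcome_pmf ::
  "real \<Rightarrow> (nat \<Rightarrow> (nat \<Rightarrow> nat \<Rightarrow> bool) \<Rightarrow> (nat \<Rightarrow> nat) pmf) \<Rightarrow> nat \<Rightarrow> nat pmf" where
  "outcome_pmf p A n =
     do { \<pi> \<leftarrow> input_pmf n;
          err \<leftarrow> error_pmf p n;
          \<sigma> \<leftarrow> A n (observe n \<pi> err);
          return_pmf (max_dislocation n (\<pi> \<circ> \<sigma>)) }"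

end

theory Submission
  imports Defs "HOL-Real_Asymp.Real_Asymp"
begin

(* Condition on the event, of probability p^k, that element 0 is reported larger than each
   of the elements 1, ..., k.  Relabelling the elements by the rotation 0 \<mapsto> k,
   j \<mapsto> j - 1 (1 \<le> j \<le> k) and adjusting the comparison errors so that every
   observed outcome stays the same gives a second instance that the algorithm cannot
   distinguish from the first; it is at least as likely, because exactly the k erroneous
   outcomes become correct and p < 1 - p.  On the same output, element 0 in the first
   instance and element k in the second sit at the same position, so one of the two
   outputs has maximum dislocation at least k/2.  Summing over these disjoint pairs of
   instances, the algorithm fails with probability at least p^k, and for k just above
   2 f(n) = o(log n) this exceeds 1/n. *)

lemma prob_le_expectation_if_paired:
  fixes M :: "'a pmf" and G :: "'a \<Rightarrow> real"
  assumes fin: "finite (set_pmf M)" and inj: "inj_on \<Phi> S" and disj: "\<Phi> ` S \<inter> S = {}"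
    and G_nonneg: "\<And>z. 0 \<le> G z"
    and pmf_le: "\<And>z. z \<in> S \<Longrightarrow> pmf M z \<le> pmf M (\<Phi> z)"
    and G_pair: "\<And>z. z \<in> S \<Longrightarrow> 1 \<le> G z + G (\<Phi> z)"
  shows "measure_pmf.prob M S \<le> measure_pmf.expectation M G"
proof -
  define S' where "S' = S \<inter> set_pmf M"
  have fin_S': "finite S'" using fin by (simp add: S'_def)
  have \<Phi>_S': "\<Phi> ` S' \<subseteq> set_pmf M"
    using pmf_le by (fastforce simp: S'_def set_pmf_eq' intro: order.strict_trans2)
  have disj': "S' \<inter> \<Phi> ` S' = {}" using disj by (auto simp: S'_def)
  have "measure_pmf.prob M S = measure_pmf.prob M S'"
    by (simp add: S'_def measure_Int_set_pmf)
  also have "\<dots> = (\<Sum>z\<in>S'. pmf M z)"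
    by (rule measure_measure_pmf_finite[OF fin_S'])
  also have "\<dots> \<le> (\<Sum>z\<in>S'. G z * pmf M z + G (\<Phi> z) * pmf M (\<Phi> z))"
  proof (rule sum_mono)
    fix z assume "z \<in> S'"
    then have "z \<in> S" by (simp add: S'_def)
    then have "pmf M z \<le> (G z + G (\<Phi> z)) * pmf M z"
      using G_pair by (simp add: mult_le_cancel_right1)
    also have "\<dots> \<le> G z * pmf M z + G (\<Phi> z) * pmf M (\<Phi> z)"
      using mult_left_mono[OF pmf_le[OF \<open>z \<in> S\<close>] G_nonneg] by (simp add: distrib_right)
    finally show "pmf M z \<le> G z * pmf M z + G (\<Phi> z) * pmf M (\<Phi> z)" .
  qed
  also have "\<dots> = (\<Sum>z\<in>S' \<union> \<Phi> ` S'. G z * pmf M z)"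
    using inj fin_S' disj' by (simp add: sum.distrib sum.union_disjoint sum.reindex S'_def inj_on_Int)
  also have "\<dots> \<le> (\<Sum>z\<in>set_pmf M. G z * pmf M z)"
    using fin \<Phi>_S' G_nonneg by (intro sum_mono2) (auto simp: S'_def)
  also have "\<dots> = measure_pmf.expectation M G"
    by (rule integral_measure_pmf_real[OF fin, symmetric]) (simp add: set_pmf_eq)
  finally show ?thesis .
qed

lemma measure_pmf_prob_bind:
  "measure_pmf.prob (bind_pmf M f) X = measure_pmf.expectation M (\<lambda>x. measure_pmf.prob (f x) X)"
  unfolding measure_pmf_bind
  by (rule subprob_space.measure_bind[OF subprob_space_measure_pmf])
     (auto simp: space_subprob_algebra measure_pmf_in_subprob_space subprob_space_measure_pmf)

definition rot :: "nat \<Rightarrow> nat \<Rightarrow> nat" where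
  "rot k j = (if j = 0 then k else if j \<le> k then j - 1 else j)"

definition rot_inv :: "nat \<Rightarrow> nat \<Rightarrow> nat" where
  "rot_inv k c = (if c = k then 0 else if c < k then c + 1 else c)"

lemma rot_inv_rot [simp]: "rot_inv k (rot k j) = j"
  unfolding rot_def rot_inv_def by auto

lemma rot_eq_iff [simp]: "rot k a = rot k b \<longleftrightarrow> a = b"
  by (metis rot_inv_rot)

lemma rot_less_or_greater: "a \<noteq> b \<Longrightarrow> rot k a < rot k b \<or> rot k b < rot k a"
  using rot_eq_iff[of k a b] by linarith

lemma rot_less: "a < n \<Longrightarrow> k < n \<Longrightarrow> rot k a < n"
  unfolding rot_def by auto

lemma rot_permutes:
  assumes "k < n"
  shows "rot k permutes {..<n}"
proof (rule bij_imp_permutes)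
  show "bij_betw (rot k) {..<n} {..<n}"
    by (rule bij_betw_byWitness[where f' = "rot_inv k"])
       (use assms in \<open>auto simp: rot_def rot_inv_def\<close>)
qed (use assms in \<open>auto simp: rot_def\<close>)

lemma rot_inverts_iff:
  assumes "a < b" "0 < k"
  shows "rot k b < rot k a \<longleftrightarrow> a = 0 \<and> b \<le> k"
  using assms unfolding rot_def by auto

lemma cmp_swap: "a \<noteq> b \<Longrightarrow> cmp e b a \<longleftrightarrow> \<not> cmp e a b"
  unfolding cmp_def by auto

definition relabel_errors :: "nat \<Rightarrow> nat \<Rightarrow> (nat \<times> nat \<Rightarrow> bool) \<Rightarrow> nat \<times> nat \<Rightarrow> bool" where
  "relabel_errors n k e = (\<lambda>(c, d). c < d \<and> d < n \<and> \<not> cmp e (rot_inv k c) (rot_inv k d))"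

lemma cmp_relabel_errors:
  assumes "a \<noteq> b" "a < n" "b < n" "k < n"
  shows "cmp (relabel_errors n k e) (rot k a) (rot k b) = cmp e a b"
proof -
  have "rot k a < n" "rot k b < n" using assms rot_less by auto
  moreover have "rot k a < rot k b \<or> rot k b < rot k a"
    using assms(1) by (rule rot_less_or_greater)
  ultimately show ?thesis
    unfolding cmp_def[of "relabel_errors n k e"]
    using cmp_swap[OF assms(1), of e] by (auto simp: relabel_errors_def)
qed

lemma observe_relabel_errors:
  assumes "\<pi> permutes {..<n}" "k < n"
  shows "observe n (rot k \<circ> \<pi>) (relabel_errors n k e) = observe n \<pi> e"
proof (intro ext)
  fix i j
  show "observe n (rot k \<circ> \<pi>) (relabel_errors n k e) i j = observe n \<pi> e i j"
  proof (cases "i < n \<and> j < n \<and> i \<noteq> j")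
    case True
    then have "\<pi> i \<noteq> \<pi> j" "\<pi> i < n" "\<pi> j < n"
      using assms(1) by (auto dest: permutes_in_image permutes_inj[THEN injD])
    with True show ?thesis
      using cmp_relabel_errors assms(2) unfolding observe_def by auto
  qed (auto simp: observe_def)
qed

definition ordered_pairs :: "nat \<Rightarrow> (nat \<times> nat) set" where
  "ordered_pairs n = {(a, b). a < b \<and> b < n}"

lemma finite_ordered_pairs: "finite (ordered_pairs n)"
  by (rule finite_subset[of _ "{..<n} \<times> {..<n}"]) (auto simp: ordered_pairs_def)

definition error_patterns :: "nat \<Rightarrow> (nat \<times> nat \<Rightarrow> bool) set" where
  "error_patterns n = {e. \<forall>z. z \<notin> ordered_pairs n \<longrightarrow> \<not> e z}"

lemma error_pmf_altdef: "error_pmf p n = Pi_pmf (ordered_pairs n) False (\<lambda>_. bernoulli_pmf p)"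
  unfolding error_pmf_def ordered_pairs_def ..

lemma set_pmf_error_pmf: "set_pmf (error_pmf p n) \<subseteq> error_patterns n"
  unfolding error_pmf_altdef error_patterns_def
  by (rule order.trans[OF set_Pi_pmf_subset[OF finite_ordered_pairs]]) simp

lemma pmf_error_pmf:
  assumes "0 \<le> p" "p \<le> 1" and "e \<in> error_patterns n"
  shows "pmf (error_pmf p n) e = (\<Prod>z\<in>ordered_pairs n. if e z then p else 1 - p)"
  using assms unfolding error_pmf_altdef error_patterns_def
  by (auto simp: pmf_Pi[OF finite_ordered_pairs] intro!: prod.cong)

lemma prob_error_pmf_min_inverted:
  assumes "0 \<le> p" "p \<le> 1" and "k < n"
  shows "measure_pmf.prob (error_pmf p n) {e. \<forall>j\<in>{1..k}. e (0, j)} = p ^ k"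
proof -
  define I where "I = (\<lambda>j. (0::nat, j)) ` {1..k}"
  have I: "I \<subseteq> ordered_pairs n" "card I = k"
    using assms(3) by (auto simp: I_def ordered_pairs_def card_image inj_on_def)
  have "{e. \<forall>j\<in>{1..k}. e (0, j)} = Pi (ordered_pairs n) (\<lambda>z. if z \<in> I then {True} else UNIV)"
    using I(1) by (auto simp: I_def Pi_def)
  then have "measure_pmf.prob (error_pmf p n) {e. \<forall>j\<in>{1..k}. e (0, j)}
      = (\<Prod>z\<in>ordered_pairs n. if z \<in> I then p else 1)"
    using assms(1,2) unfolding error_pmf_altdef
    by (simp add: measure_Pi_pmf_Pi[OF finite_ordered_pairs] measure_pmf_single if_distrib cong: if_cong)
  also have "\<dots> = (\<Prod>z\<in>I. p)"
    by (rule prod.mono_neutral_cong_right[OF finite_ordered_pairs I(1)]) auto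
  finally show ?thesis using I(2) by simp
qed

definition rot_pair :: "nat \<Rightarrow> nat \<times> nat \<Rightarrow> nat \<times> nat" where
  "rot_pair k = (\<lambda>(a, b). if rot k a < rot k b then (rot k a, rot k b) else (rot k b, rot k a))"

lemma relabel_errors_rot_pair:
  assumes "a < b" "b < n" "k < n"
  shows "relabel_errors n k e (rot_pair k (a, b)) = (if rot k a < rot k b then e (a, b) else \<not> e (a, b))"
proof (cases "rot k a < rot k b")
  case True
  then show ?thesis
    using assms rot_less[of _ n k] by (simp add: rot_pair_def relabel_errors_def cmp_def)
next
  case False
  then have "rot k b < rot k a" using assms(1) rot_less_or_greater[of a b k] by simp
  with False show ?thesis
    using assms rot_less[of _ n k] by (simp add: rot_pair_def relabel_errors_def cmp_def)
qed

lemma bij_betw_rot_pair: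
  assumes "k < n"
  shows "bij_betw (rot_pair k) (ordered_pairs n) (ordered_pairs n)"
proof -
  have inj: "inj_on (rot_pair k) (ordered_pairs n)"
    by (rule inj_onI) (auto simp: ordered_pairs_def rot_pair_def split: if_splits)
  have "rot_pair k (a, b) \<in> ordered_pairs n" if "a < b" "b < n" for a b
    using that assms rot_less[of _ n k] rot_less_or_greater[of a b k]
    by (auto simp: ordered_pairs_def rot_pair_def)
  then have "rot_pair k ` ordered_pairs n \<subseteq> ordered_pairs n"
    by (force simp: ordered_pairs_def)
  with inj show ?thesis
    by (simp add: bij_betw_def endo_inj_surj finite_ordered_pairs)
qed

lemma relabel_errors_in_error_patterns: "relabel_errors n k e \<in> error_patterns n"
  by (auto simp: error_patterns_def relabel_errors_def ordered_pairs_def)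

lemma relabel_errors_zero_k:
  assumes "0 < k" "k < n"
  shows "relabel_errors n k e (0, k) \<longleftrightarrow> \<not> e (0, 1)"
  using assms by (simp add: relabel_errors_def cmp_def rot_inv_def)

lemma pmf_error_pmf_le_relabel_errors:
  assumes p: "0 \<le> p" "p \<le> 1/2" and k: "0 < k" "k < n"
    and "e \<in> error_patterns n" and inverted: "\<forall>j\<in>{1..k}. e (0, j)"
  shows "pmf (error_pmf p n) e \<le> pmf (error_pmf p n) (relabel_errors n k e)"
proof -
  let ?w = "\<lambda>b. if b then p else 1 - p"
  have "pmf (error_pmf p n) e = (\<Prod>z\<in>ordered_pairs n. ?w (e z))"
    using p assms(5) by (simp add: pmf_error_pmf)
  also have "\<dots> \<le> (\<Prod>z\<in>ordered_pairs n. ?w (relabel_errors n k e (rot_pair k z)))"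
  proof (rule prod_mono)
    fix z assume "z \<in> ordered_pairs n"
    then obtain a b where z: "z = (a, b)" "a < b" "b < n" by (auto simp: ordered_pairs_def)
    have "e z" if "\<not> rot k a < rot k b"
    proof -
      have "rot k b < rot k a" using that z(2) rot_less_or_greater[of a b k] by auto
      then show ?thesis using inverted rot_inverts_iff[OF z(2) k(1)] z(1,2) by auto
    qed
    then show "0 \<le> ?w (e z) \<and> ?w (e z) \<le> ?w (relabel_errors n k e (rot_pair k z))"
      using p relabel_errors_rot_pair[OF z(2,3) k(2)] z(1) by auto
  qed
  also have "\<dots> = (\<Prod>z\<in>ordered_pairs n. ?w (relabel_errors n k e z))"
    by (rule prod.reindex_bij_betw[OF bij_betw_rot_pair[OF k(2)]])
  also have "\<dots> = pmf (error_pmf p n) (relabel_errors n k e)"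
    using p relabel_errors_in_error_patterns by (simp add: pmf_error_pmf)
  finally show ?thesis .
qed

lemma inj_on_relabel_errors:
  assumes "k < n"
  shows "inj_on (relabel_errors n k) (error_patterns n)"
proof (rule inj_onI, rule ext)
  fix e1 e2 z
  assume "e1 \<in> error_patterns n" "e2 \<in> error_patterns n"
    and eq: "relabel_errors n k e1 = relabel_errors n k e2"
  show "e1 z = e2 z"
  proof (cases "z \<in> ordered_pairs n")
    case True
    then obtain a b where z: "z = (a, b)" "a < b" "b < n" by (auto simp: ordered_pairs_def)
    show ?thesis
      using eq z(1) relabel_errors_rot_pair[OF z(2,3) assms, of e1]
        relabel_errors_rot_pair[OF z(2,3) assms, of e2]
      by (auto split: if_splits)
  qed (use \<open>e1 \<in> error_patterns n\<close> \<open>e2 \<in> error_patterns n\<close>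
        in \<open>unfold error_patterns_def, blast\<close>)
qed

lemma inj_on_relabel_instance:
  assumes "k < n"
  shows "inj_on (map_prod ((\<circ>) (rot k)) (relabel_errors n k)) (UNIV \<times> error_patterns n)"
proof (rule map_prod_inj_on)
  show "inj_on ((\<circ>) (rot k)) UNIV" by (auto simp: inj_on_def fun_eq_iff)
qed (rule inj_on_relabel_errors[OF assms])

lemma dislocation_le_max_dislocation:
  "m < n \<Longrightarrow> nat \<bar>int m - int (s m)\<bar> \<le> max_dislocation n s"
  unfolding max_dislocation_def by (rule Max_ge) auto

lemma max_dislocation_add_rot_ge:
  assumes "\<pi> permutes {..<n}" "\<sigma> permutes {..<n}" "k < n"
  shows "k \<le> max_dislocation n (\<pi> \<circ> \<sigma>) + max_dislocation n (rot k \<circ> \<pi> \<circ> \<sigma>)"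
proof -
  have "0 \<in> (\<pi> \<circ> \<sigma>) ` {..<n}"
    using permutes_image[OF permutes_compose[OF assms(2,1)]] assms(3) by auto
  then obtain m where m: "m < n" "\<pi> (\<sigma> m) = 0" by auto
  have "m \<le> max_dislocation n (\<pi> \<circ> \<sigma>)"
    using dislocation_le_max_dislocation[OF m(1), of "\<pi> \<circ> \<sigma>"] m(2) by simp
  moreover have "nat \<bar>int m - int k\<bar> \<le> max_dislocation n (rot k \<circ> \<pi> \<circ> \<sigma>)"
    using dislocation_le_max_dislocation[OF m(1), of "rot k \<circ> \<pi> \<circ> \<sigma>"] m(2) by (simp add: rot_def)
  ultimately show ?thesis by linarith
qed

lemma prob_fail_add_rot_ge_1:
  assumes "valid_algorithm A" "\<pi> permutes {..<n}" "k < n" "2 * t < real k"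
  shows "1 \<le> measure_pmf.prob (A n obs) {\<sigma>. t < real (max_dislocation n (\<pi> \<circ> \<sigma>))}
            + measure_pmf.prob (A n obs) {\<sigma>. t < real (max_dislocation n (rot k \<circ> \<pi> \<circ> \<sigma>))}"
    (is "1 \<le> measure_pmf.prob _ ?X1 + measure_pmf.prob _ ?X2")
proof -
  have "\<sigma> \<in> ?X1 \<union> ?X2" if "\<sigma> \<in> set_pmf (A n obs)" for \<sigma>
  proof -
    have "\<sigma> permutes {..<n}" using that assms(1) unfolding valid_algorithm_def by blast
    then show ?thesis using max_dislocation_add_rot_ge[OF assms(2) _ assms(3)] assms(4) by fastforce
  qed
  then have "measure_pmf.prob (A n obs) (?X1 \<union> ?X2) = 1"
    by (simp add: measure_pmf.prob_eq_1 AE_pmfI)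
  moreover have "measure_pmf.prob (A n obs) (?X1 \<union> ?X2)
                  \<le> measure_pmf.prob (A n obs) ?X1 + measure_pmf.prob (A n obs) ?X2"
    by (rule measure_Un_le) auto
  ultimately show ?thesis by linarith
qed

lemma set_pmf_input_pmf: "set_pmf (input_pmf n) = {\<pi>. \<pi> permutes {..<n}}"
  unfolding input_pmf_def by (rule set_pmf_of_set) (auto intro: finite_permutations permutes_id)

lemma pmf_input_pmf_rot:
  assumes "\<pi> permutes {..<n}" "k < n"
  shows "pmf (input_pmf n) (rot k \<circ> \<pi>) = pmf (input_pmf n) \<pi>"
proof -
  have "{\<pi>. \<pi> permutes {..<n}} \<noteq> {}" "finite {\<pi>. \<pi> permutes {..<n}}"
    by (auto intro: permutes_id finite_permutations)
  then show ?thesis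
    using assms permutes_compose[OF assms(1) rot_permutes[OF assms(2)]] by (simp add: input_pmf_def)
qed

lemma finite_set_pmf_instances: "finite (set_pmf (pair_pmf (input_pmf n) (error_pmf p n)))"
  unfolding set_pair_pmf set_pmf_input_pmf error_pmf_altdef set_Pi_pmf[OF finite_ordered_pairs]
  by (intro finite_cartesian_product finite_PiE_dflt finite_permutations finite_ordered_pairs) simp_all

lemma pmf_instance_le_relabel_instance:
  assumes p: "0 \<le> p" "p \<le> 1/2" and k: "0 < k" "k < n" and "\<pi> permutes {..<n}"
    and "e \<in> error_patterns n" and "\<forall>j\<in>{1..k}. e (0, j)"
  shows "pmf (pair_pmf (input_pmf n) (error_pmf p n)) (\<pi>, e)
       \<le> pmf (pair_pmf (input_pmf n) (error_pmf p n)) (rot k \<circ> \<pi>, relabel_errors n k e)"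
  using pmf_error_pmf_le_relabel_errors[OF p k assms(6,7)] pmf_input_pmf_rot[OF assms(5) k(2)]
  by (simp add: pmf_pair mult_left_mono)

lemma prob_outcome_pmf:
  "measure_pmf.prob (outcome_pmf p A n) {d. P d}
   = measure_pmf.expectation (pair_pmf (input_pmf n) (error_pmf p n))
       (\<lambda>(\<pi>, e). measure_pmf.prob (A n (observe n \<pi> e)) {\<sigma>. P (max_dislocation n (\<pi> \<circ> \<sigma>))})"
proof -
  have "outcome_pmf p A n = bind_pmf (pair_pmf (input_pmf n) (error_pmf p n))
          (\<lambda>(\<pi>, e). map_pmf (\<lambda>\<sigma>. max_dislocation n (\<pi> \<circ> \<sigma>)) (A n (observe n \<pi> e)))"
    unfolding outcome_pmf_def pair_pmf_def by (simp add: bind_assoc_pmf bind_return_pmf map_pmf_def)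
  then show ?thesis by (simp add: measure_pmf_prob_bind split_def vimage_def)
qed

lemma outcome_failure_prob_ge:
  assumes p: "0 < p" "p \<le> 1/2" and A: "valid_algorithm A"
    and k: "0 < k" "k < n" and t: "2 * t < real k"
  shows "p ^ k \<le> measure_pmf.prob (outcome_pmf p A n) {d. t < real d}"
proof -
  define M where "M = pair_pmf (input_pmf n) (error_pmf p n)"
  define G where "G = (\<lambda>(\<pi>, e). measure_pmf.prob (A n (observe n \<pi> e))
                          {\<sigma>. t < real (max_dislocation n (\<pi> \<circ> \<sigma>))})"
  define E where "E = {e. \<forall>j\<in>{1..k}. e (0::nat, j)}"
  define S where "S = snd -` E \<inter> set_pmf M"
  define \<Phi> where "\<Phi> = map_prod ((\<circ>) (rot k) :: (nat \<Rightarrow> nat) \<Rightarrow> _) (relabel_errors n k)"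
  have S: "\<pi> permutes {..<n}" "e \<in> error_patterns n" "\<forall>j\<in>{1..k}. e (0, j)"
    if "(\<pi>, e) \<in> S" for \<pi> e
    using that by (auto simp: S_def E_def M_def set_pmf_input_pmf dest!: subsetD[OF set_pmf_error_pmf])
  have "p ^ k = measure_pmf.prob (error_pmf p n) E"
    using prob_error_pmf_min_inverted[of p k n] p k unfolding E_def by simp
  also have "\<dots> = measure_pmf.prob M S"
    unfolding S_def measure_Int_set_pmf by (metis M_def map_snd_pair_pmf measure_map_pmf)
  also have "\<dots> \<le> measure_pmf.expectation M G"
  proof (rule prob_le_expectation_if_paired)
    show "finite (set_pmf M)" unfolding M_def by (rule finite_set_pmf_instances)
    show "inj_on \<Phi> S"
      unfolding \<Phi>_def by (rule inj_on_subset[OF inj_on_relabel_instance[OF k(2)]]) (auto dest: S(2))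
    have "\<Phi> z \<notin> S" if "z \<in> S" for z
    proof -
      obtain \<pi> e where z: "z = (\<pi>, e)" "(\<pi>, e) \<in> S" using \<open>z \<in> S\<close> by (cases z) auto
      then have "\<not> relabel_errors n k e (0, k)" using k S(3)[OF z(2)] by (simp add: relabel_errors_zero_k)
      then show ?thesis using k S(3)[of "rot k \<circ> \<pi>" "relabel_errors n k e"] by (auto simp: z \<Phi>_def)
    qed
    then show "\<Phi> ` S \<inter> S = {}" by blast
    show "0 \<le> G z" for z by (simp add: G_def split: prod.split)
    show "pmf M z \<le> pmf M (\<Phi> z)" and "1 \<le> G z + G (\<Phi> z)" if "z \<in> S" for z
    proof -
      obtain \<pi> e where z: "z = (\<pi>, e)" "(\<pi>, e) \<in> S" using \<open>z \<in> S\<close> by (cases z) auto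
      show "pmf M z \<le> pmf M (\<Phi> z)"
        using pmf_instance_le_relabel_instance[OF _ p(2) k S[OF z(2)]] p(1)
        by (simp add: z M_def \<Phi>_def)
      show "1 \<le> G z + G (\<Phi> z)"
        using prob_fail_add_rot_ge_1[OF A S(1)[OF z(2)] k(2) t]
        by (simp add: z G_def \<Phi>_def observe_relabel_errors[OF S(1)[OF z(2)] k(2)] comp_assoc)
    qed
  qed
  also have "\<dots> = measure_pmf.prob (outcome_pmf p A n) {d. t < real d}"
    by (simp add: prob_outcome_pmf M_def G_def)
  finally show ?thesis .
qed

lemma eventually_pow_gt_inverse:
  fixes k :: "nat \<Rightarrow> nat"
  assumes "0 < p" "p < 1" and k: "(\<lambda>n. real (k n)) \<in> o(\<lambda>n. ln (real n))"
  shows "\<forall>\<^sub>F n in at_top. k n < n \<and> 1 / real n < p ^ k n"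
proof -
  define L where "L = - ln p"
  have L: "0 < L" using assms by (simp add: L_def)
  have "0 < 1 / (2 * L + 2)" using L by simp
  then have "\<forall>\<^sub>F n in at_top. norm (real (k n)) \<le> 1 / (2 * L + 2) * norm (ln (real n))"
    by (rule landau_o.smallD[OF k])
  moreover have "\<forall>\<^sub>F n in at_top. 2 \<le> (n::nat)" by (rule eventually_ge_at_top)
  ultimately show ?thesis
  proof eventually_elim
    case (elim n)
    have ln_pos: "0 < ln (real n)" using elim(2) by simp
    then have "2 * (L * real (k n)) + 2 * real (k n) \<le> ln (real n)"
      using elim(1) L by (simp add: field_simps)
    moreover have "0 \<le> L * real (k n)" using L by simp
    moreover have "ln (real n) < real n" using elim(2) by simp
    ultimately have k_less: "real (k n) < real n" and Lk_less: "L * real (k n) < ln (real n)"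
      using ln_pos by linarith+
    have "1 / real n = exp (- ln (real n))" using elim(2) by (simp add: exp_minus inverse_eq_divide)
    also have "\<dots> < exp (real (k n) * ln p)" using Lk_less by (simp add: L_def mult.commute)
    also have "\<dots> = p ^ k n" using assms(1) by (simp add: exp_of_nat_mult)
    finally have "1 / real n < p ^ k n" .
    with k_less show ?case by simp
  qed
qed

lemma nat_floor_double_succ_smallo:
  fixes f :: "nat \<Rightarrow> real"
  assumes "f \<in> o(\<lambda>n. ln (real n))"
  shows "(\<lambda>n. real (nat \<lfloor>2 * f n\<rfloor> + 1)) \<in> o(\<lambda>n. ln (real n))"
proof (rule landau_o.big_small_trans)
  show "(\<lambda>n. real (nat \<lfloor>2 * f n\<rfloor> + 1)) \<in> O(\<lambda>n. 2 * \<bar>f n\<bar> + 1)"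
    by (intro landau_o.big_mono always_eventually allI) (simp add: nat_le_iff, linarith)
  have "(\<lambda>n. 2 * \<bar>f n\<bar>) \<in> o(\<lambda>n. ln (real n))" using assms by simp
  moreover have "(\<lambda>n. 1) \<in> o(\<lambda>n::nat. ln (real n))" by real_asymp
  ultimately show "(\<lambda>n. 2 * \<bar>f n\<bar> + 1) \<in> o(\<lambda>n. ln (real n))" by (rule sum_in_smallo)
qed

theorem theorem6p2:
  fixes p :: real
    and A :: "nat \<Rightarrow> (nat \<Rightarrow> nat \<Rightarrow> bool) \<Rightarrow> (nat \<Rightarrow> nat) pmf"
    and f :: "nat \<Rightarrow> real"
  assumes "0 < p" and "p < 1/2"
    and "valid_algorithm A"
    and "f \<in> o(\<lambda>n. ln (real n))"
  shows "\<not> (\<forall>\<^sub>F n in at_top.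
            measure_pmf.prob (outcome_pmf p A n) {d. real d \<le> f n} \<ge> 1 - 1 / real n)"
proof
  assume success: "\<forall>\<^sub>F n in at_top.
            measure_pmf.prob (outcome_pmf p A n) {d. real d \<le> f n} \<ge> 1 - 1 / real n"
  define k where "k n = nat \<lfloor>2 * f n\<rfloor> + 1" for n
  have "\<forall>\<^sub>F n in at_top. k n < n \<and> 1 / real n < p ^ k n"
    using assms(1,2) nat_floor_double_succ_smallo[OF assms(4)]
    by (intro eventually_pow_gt_inverse) (simp_all add: k_def)
  then have "\<forall>\<^sub>F n :: nat in at_top. False" using success
  proof eventually_elim
    case (elim n)
    have "2 * f n < real (k n)" unfolding k_def by linarith
    then have "p ^ k n \<le> measure_pmf.prob (outcome_pmf p A n) {d. f n < real d}"
      using assms(1-3) elim(1) by (intro outcome_failure_prob_ge) (simp_all add: k_def)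
    also have "\<dots> = 1 - measure_pmf.prob (outcome_pmf p A n) {d. real d \<le> f n}"
      using measure_pmf.prob_compl[of "{d. real d \<le> f n}" "outcome_pmf p A n"]
      by (simp add: Compl_eq_Diff_UNIV[symmetric] Collect_neg_eq[symmetric] not_le)
    finally show False using elim by linarith
  qed
  then show False by simp
qed

end
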